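(* Let $\mathcal{A}$ be a Banach algebra such that $\mathrm{rad}(\mathcal{A})=\mathrm{rann}(\mathcal{A})$ and $\mathcal{A}/\mathrm{rad}(\mathcal{A})$ is commutative. Let $T$ be a left multiplier of $\mathcal{A}$. Then $T(\mathcal{A})\subseteq\mathrm{rad}(\mathcal{A})$ if and only if $T$ is spectrally infinitesimal.
   Context: $\mathrm{rad}(\mathcal{A})$ is the Jacobson radical and $\mathrm{rann}(\mathcal{A})=\{c\in\mathcal{A}: ac=0\ \forall a\in\mathcal{A}\}$. A left multiplier is a linear map $T:\mathcal{A}\to\mathcal{A}$ with $T(ab)=T(a)b$ for all $a,b$. $T$ is spectrally infinitesimal if $r(T(a))=0$ for all $a\in\mathcal{A}$, $r$ the spectral radius. *)

theory Defs
  imports "HOL-Analysis.Analysis"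
begin

text \<open>A complex Banach algebra (not necessarily unital, not necessarily commutative) is
modelled as a type of class real_normed_algebra and banach (complete, submultiplicative
norm, associative multiplication without assumed unit) together with a complex scalar
multiplication sc extending the real one and compatible with the algebra structure and
the norm.\<close>

definition complex_banach_algebra ::
  "(complex \<Rightarrow> 'a::{real_normed_algebra,banach} \<Rightarrow> 'a) \<Rightarrow> bool" where
  "complex_banach_algebra sc \<longleftrightarrow>
     (\<forall>r x. sc (complex_of_real r) x = r *\<^sub>R x) \<and>
     (\<forall>c x y. sc c (x + y) = sc c x + sc c y) \<and>
     (\<forall>c d x. sc (c + d) x = sc c x + sc d x) \<and>
     (\<forall>c d x. sc c (sc d x) = sc (c * d) x) \<and>
     (\<forall>c x y. sc c (x * y) = sc c x * y \<and> sc c (x * y) = x * sc c y) \<and>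
     (\<forall>c x. norm (sc c x) = cmod c * norm x)"

text \<open>Quasi-invertibility (x is quasi-invertible iff 1 - x is invertible in the unitization).\<close>

definition left_quasi_invertible :: "'a::ring \<Rightarrow> bool" where
  "left_quasi_invertible x \<longleftrightarrow> (\<exists>y. y + x - y * x = 0)"

definition quasi_invertible :: "'a::ring \<Rightarrow> bool" where
  "quasi_invertible x \<longleftrightarrow> (\<exists>y. x + y - x * y = 0 \<and> x + y - y * x = 0)"

text \<open>Spectrum of a, computed in the unitization A# (so 0 always belongs to it):
for nonzero lambda, lambda - a is invertible in A# iff a/lambda is quasi-invertible.\<close>

definition alg_spectrum :: "(complex \<Rightarrow> 'a::{real_normed_algebra,banach} \<Rightarrow> 'a) \<Rightarrow> 'a \<Rightarrow> complex set" where
  "alg_spectrum sc a = insert 0 {z. z \<noteq> 0 \<and> \<not> quasi_invertible (sc (1 / z) a)}"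

definition spectral_radius :: "(complex \<Rightarrow> 'a::{real_normed_algebra,banach} \<Rightarrow> 'a) \<Rightarrow> 'a \<Rightarrow> real" where
  "spectral_radius sc a = Sup (cmod ` alg_spectrum sc a)"

text \<open>Jacobson radical: a is in rad(A) iff b a is left quasi-invertible for every b in the
unitization A#, i.e. for every b = lambda 1 + c.\<close>

definition jacobson_radical :: "(complex \<Rightarrow> 'a::{real_normed_algebra,banach} \<Rightarrow> 'a) \<Rightarrow> 'a set" where
  "jacobson_radical sc = {a. \<forall>z c. left_quasi_invertible (sc z a + c * a)}"

definition right_annihilator :: "'a::ring set" where
  "right_annihilator = {c. \<forall>a. a * c = 0}"

definition left_multiplier :: "(complex \<Rightarrow> 'a::{real_normed_algebra,banach} \<Rightarrow> 'a) \<Rightarrow> ('a \<Rightarrow> 'a) \<Rightarrow> bool" where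
  "left_multiplier sc T \<longleftrightarrow>
     (\<forall>x y. T (x + y) = T x + T y) \<and> (\<forall>c x. T (sc c x) = sc c (T x)) \<and>
     (\<forall>a b. T (a * b) = T a * b)"

definition spectrally_infinitesimal :: "(complex \<Rightarrow> 'a::{real_normed_algebra,banach} \<Rightarrow> 'a) \<Rightarrow> ('a \<Rightarrow> 'a) \<Rightarrow> bool" where
  "spectrally_infinitesimal sc T \<longleftrightarrow> (\<forall>a. spectral_radius sc (T a) = 0)"

end

theory Submission
  imports Defs
begin

text \<open>Elements of the right annihilator square to zero, hence have trivial spectrum; so
rad = rann makes every element of the radical spectrally infinitesimal. Conversely,
a spectral radius below 1 excludes 1 from the spectrum (the spectrum is bounded by the norm, by
the Neumann series), so a spectrally infinitesimal left multiplier has a right ideal of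
quasi-invertible elements as its range, and such a right ideal lies in the radical by
Jacobson's swap: if x a is left quasi-invertible, so is a x.\<close>

lemma complex_banach_algebra_additive:
  "complex_banach_algebra sc \<Longrightarrow> Modules.additive (sc c)"
  by (simp add: complex_banach_algebra_def Modules.additive_def)

lemma complex_banach_algebra_one:
  "complex_banach_algebra sc \<Longrightarrow> sc 1 x = x"
  unfolding complex_banach_algebra_def by (metis of_real_1 scaleR_one)

lemma complex_banach_algebra_mult_left:
  "complex_banach_algebra sc \<Longrightarrow> sc c (x * y) = sc c x * y"
  by (simp add: complex_banach_algebra_def)

lemma complex_banach_algebra_mult_right:
  "complex_banach_algebra sc \<Longrightarrow> sc c (x * y) = x * sc c y"
  unfolding complex_banach_algebra_def by blast

lemma complex_banach_algebra_norm:
  "complex_banach_algebra sc \<Longrightarrow> norm (sc c x) = cmod c * norm x"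
  by (simp add: complex_banach_algebra_def)

text \<open>The algebra has no unit, so the Neumann series is indexed by the powers
u ^ (n + 1).\<close>

primrec power_succ :: "'a::real_normed_algebra \<Rightarrow> nat \<Rightarrow> 'a" where
  "power_succ u 0 = u"
| "power_succ u (Suc n) = u * power_succ u n"

lemma power_succ_Suc_right: "power_succ u (Suc n) = power_succ u n * u"
  by (induction n) (simp_all add: mult.assoc[symmetric])

lemma norm_power_succ_le: "norm (power_succ u n) \<le> norm u ^ Suc n"
proof (induction n)
  case 0
  then show ?case by simp
next
  case (Suc n)
  have "norm (power_succ u (Suc n)) \<le> norm u * norm (power_succ u n)"
    by (simp add: norm_mult_ineq)
  also have "\<dots> \<le> norm u * norm u ^ Suc n"
    using Suc by (simp add: mult_left_mono)
  finally show ?case by simp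
qed

lemma quasi_invertible_if_norm_less_one:
  fixes u :: "'a::{real_normed_algebra,banach}"
  assumes "norm u < 1"
  shows "quasi_invertible u"
proof -
  have "summable (\<lambda>n. norm u ^ Suc n)"
    using assms by (simp add: summable_geometric summable_mult)
  then have summable: "summable (power_succ u)"
    by (rule summable_comparison_test') (use norm_power_succ_le in auto)
  define S where "S = suminf (power_succ u)"
  have tail: "(\<Sum>n. power_succ u (Suc n)) = S - u"
    using suminf_split_head[OF summable] by (simp add: S_def)
  have left: "u * S = S - u"
    using suminf_mult[OF summable, of u] tail by (simp add: S_def)
  have "S * u = (\<Sum>n. power_succ u (Suc n))"
    by (simp only: S_def suminf_mult2[OF summable] power_succ_Suc_right)
  with tail have right: "S * u = S - u"
    by simp
  show ?thesis
    unfolding quasi_invertible_def by (rule exI[of _ "- S"]) (simp add: left right)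
qed

lemma alg_spectrum_subset_cball:
  assumes "complex_banach_algebra sc"
  shows "alg_spectrum sc a \<subseteq> cball 0 (norm a)"
proof
  fix z
  assume z: "z \<in> alg_spectrum sc a"
  show "z \<in> cball 0 (norm a)"
  proof (rule ccontr)
    assume "z \<notin> cball 0 (norm a)"
    then have large: "norm a < cmod z"
      by simp
    then have "norm (sc (1 / z) a) < 1"
      using assms by (simp add: complex_banach_algebra_norm norm_divide divide_less_eq)
    then have "quasi_invertible (sc (1 / z) a)"
      by (rule quasi_invertible_if_norm_less_one)
    with z large show False
      by (auto simp: alg_spectrum_def)
  qed
qed

lemma quasi_invertible_if_spectral_radius_less_one:
  assumes "complex_banach_algebra sc" and "spectral_radius sc a < 1"
  shows "quasi_invertible a"
proof (rule ccontr)
  assume "\<not> quasi_invertible a"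
  then have "1 \<in> alg_spectrum sc a"
    using assms(1) by (simp add: alg_spectrum_def complex_banach_algebra_one)
  moreover have "bdd_above (cmod ` alg_spectrum sc a)"
    using alg_spectrum_subset_cball[OF assms(1), of a] by (intro bdd_aboveI[of _ "norm a"]) auto
  ultimately have "1 \<le> spectral_radius sc a"
    unfolding spectral_radius_def by (metis cSup_upper imageI norm_one)
  with assms(2) show False
    by simp
qed

lemma left_quasi_invertible_if_quasi_invertible:
  "quasi_invertible x \<Longrightarrow> left_quasi_invertible x"
  unfolding quasi_invertible_def left_quasi_invertible_def by (auto simp: add.commute)

lemma quasi_invertible_if_right_annihilator:
  "c \<in> right_annihilator \<Longrightarrow> quasi_invertible c"
  unfolding quasi_invertible_def right_annihilator_def by (intro exI[of _ "- c"]) simp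

lemma spectral_radius_right_annihilator:
  assumes "complex_banach_algebra sc" and "a \<in> right_annihilator"
  shows "spectral_radius sc a = 0"
proof -
  have "sc w a \<in> right_annihilator" for w
    using assms Modules.additive.zero[OF complex_banach_algebra_additive[OF assms(1)]]
    by (simp add: right_annihilator_def complex_banach_algebra_mult_right[symmetric])
  then have "alg_spectrum sc a = {0}"
    by (auto simp: alg_spectrum_def quasi_invertible_if_right_annihilator)
  then show ?thesis
    by (simp add: spectral_radius_def)
qed

text \<open>Jacobson's swap, with M playing the left multiplication by an element of the
unitization: if x a is left quasi-invertible with left quasi-inverse y, then
a (y x) - a x is a left quasi-inverse of a x.\<close>

lemma left_quasi_invertible_swap:
  fixes M :: "'a::ring \<Rightarrow> 'a"
  assumes "Modules.additive M"
    and mult: "\<And>p q. M (p * q) = M p * q"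
    and swap: "x * M x = v * x"
    and "left_quasi_invertible v"
  shows "left_quasi_invertible (M x)"
proof -
  obtain y where y: "y + v - y * v = 0"
    using assms(4) unfolding left_quasi_invertible_def by blast
  have square: "M x * M x = M (v * x)"
    using mult[of x "M x"] swap by simp
  have cross: "M (y * x) * M x = M (y * v * x)"
    using mult[of "y * x" "M x"] swap by (simp add: mult.assoc)
  have "(M (y * x) - M x) + M x - (M (y * x) - M x) * M x
      = M (y * x) + M (v * x) - M (y * v * x)"
    by (simp add: algebra_simps square cross)
  also have "\<dots> = M (y * x + v * x - y * v * x)"
    using assms(1) by (simp only: Modules.additive.add Modules.additive.diff)
  also have "\<dots> = M ((y + v - y * v) * x)"
    by (simp add: algebra_simps)
  also have "\<dots> = 0"
    using assms(1) by (simp add: y Modules.additive.zero)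
  finally show ?thesis
    unfolding left_quasi_invertible_def by blast
qed

lemma right_ideal_subset_jacobson_radical:
  assumes sc: "complex_banach_algebra sc"
    and ideal: "\<And>x z c. x \<in> I \<Longrightarrow> sc z x + x * c \<in> I"
    and qi: "\<And>x. x \<in> I \<Longrightarrow> left_quasi_invertible x"
  shows "I \<subseteq> jacobson_radical sc"
proof
  fix x
  assume x: "x \<in> I"
  have "left_quasi_invertible (sc z x + c * x)" for z c
  proof (rule left_quasi_invertible_swap
      [where M = "\<lambda>p. sc z p + c * p" and v = "sc z x + x * c"])
    show "Modules.additive (\<lambda>p. sc z p + c * p)"
      using complex_banach_algebra_additive[OF sc, of z]
      by (simp add: Modules.additive_def distrib_left add_ac)
    show "sc z (p * q) + c * (p * q) = (sc z p + c * p) * q" for p q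
      using sc by (simp add: complex_banach_algebra_mult_left distrib_right mult.assoc)
    show "x * (sc z x + c * x) = (sc z x + x * c) * x"
      using complex_banach_algebra_mult_left[OF sc, of z x x]
        complex_banach_algebra_mult_right[OF sc, of z x x]
      by (simp add: distrib_left distrib_right mult.assoc)
    show "left_quasi_invertible (sc z x + x * c)"
      using ideal qi x by blast
  qed
  then show "x \<in> jacobson_radical sc"
    by (simp add: jacobson_radical_def)
qed

theorem theorem5p6:
  fixes sc :: "complex \<Rightarrow> 'a::{real_normed_algebra,banach} \<Rightarrow> 'a"
    and T :: "'a \<Rightarrow> 'a"
  assumes "complex_banach_algebra sc"
    and "jacobson_radical sc = right_annihilator"
    and "\<forall>a b. a * b - b * a \<in> jacobson_radical sc"
    and "left_multiplier sc T"
  shows "T ` UNIV \<subseteq> jacobson_radical sc \<longleftrightarrow> spectrally_infinitesimal sc T"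
proof
  assume "T ` UNIV \<subseteq> jacobson_radical sc"
  then show "spectrally_infinitesimal sc T"
    using assms(1,2) spectral_radius_right_annihilator
    by (auto simp: spectrally_infinitesimal_def)
next
  assume "spectrally_infinitesimal sc T"
  then have "left_quasi_invertible (T a)" for a
    by (intro left_quasi_invertible_if_quasi_invertible
        quasi_invertible_if_spectral_radius_less_one[OF assms(1)])
      (simp add: spectrally_infinitesimal_def)
  moreover have "sc z (T a) + T a * c = T (sc z a + a * c)" for z a c
    using assms(4) by (simp add: left_multiplier_def)
  ultimately show "T ` UNIV \<subseteq> jacobson_radical sc"
    by (intro right_ideal_subset_jacobson_radical[OF assms(1)]) auto
qed

end
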